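(* Let $X$ be a topological space and $g,h:X\to\overline{\mathbb R}$. Then the following are equivalent: (i) $(g,h)$ is a stable pair of Hahn; (ii) $(g,h)$ is a countable pair of Hahn and $g$ and $h$ are functions of the first stable Baire class. Moreover, if $X$ is normal, then (i) and (ii) are also equivalent to each of: (iii) $(g,h)$ is a pair of Hahn and $g$ and $h$ are functions of the first stable Baire class; (iv) $(g,h)$ is a pair of Hahn and $g$ and $h$ are $\sigma$-continuous.
   Context: $\overline{\mathbb R}=[-\infty,+\infty]$ with the order topology. A pair $(g,h)$ is a pair of Hahn if $g\le h$, $g$ is upper semicontinuous and $h$ is lower semicontinuous. It is a countable pair of Hahn if there are continuous $g_n,h_n:X\to\overline{\mathbb R}$ with $g(x)=\inf_n g_n(x)\le\sup_n h_n(x)=h(x)$ for all $x$. It is a stable pair of Hahn if there are continuous $u_n:X\to\overline{\mathbb R}$ with $g(x)=\min_{n\in\mathbb N}u_n(x)$ and $h(x)=\max_{n\in\mathbb N}u_n(x)$ for all $x\in X$ (attained). A sequence $f_n:X\to Z$ converges stably to $f$ if for every $x\in X$ there is $n$ with $f_k(x)=f(x)$ for all $k\ge n$; $f$ is of the first stable Baire class if it is the stable limit of a sequence of continuous functions $X\to\overline{\mathbb R}$. A function $f:X\to\overline{\mathbb R}$ is $\sigma$-continuous if there is a sequence of closed sets $X_n\subseteq X$ with $X=\bigcup_n X_n$ and $f|_{X_n}$ continuous for each $n$. *)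

theory Defs
  imports "HOL-Analysis.Analysis" "HOL-Library.Extended_Real"
begin

text \<open>Extended reals carry the order topology (the library's topology on ereal).
All notions are relative to a general topological space X and only concern
points of topspace X.\<close>

definition usc_map :: "'a topology \<Rightarrow> ('a \<Rightarrow> ereal) \<Rightarrow> bool" where
  "usc_map X f \<longleftrightarrow> (\<forall>t. openin X {x \<in> topspace X. f x < t})"

definition lsc_map :: "'a topology \<Rightarrow> ('a \<Rightarrow> ereal) \<Rightarrow> bool" where
  "lsc_map X f \<longleftrightarrow> (\<forall>t. openin X {x \<in> topspace X. t < f x})"

definition hahn_pair :: "'a topology \<Rightarrow> ('a \<Rightarrow> ereal) \<Rightarrow> ('a \<Rightarrow> ereal) \<Rightarrow> bool" where
  "hahn_pair X g h \<longleftrightarrow> (\<forall>x\<in>topspace X. g x \<le> h x) \<and> usc_map X g \<and> lsc_map X h"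

definition countable_hahn_pair :: "'a topology \<Rightarrow> ('a \<Rightarrow> ereal) \<Rightarrow> ('a \<Rightarrow> ereal) \<Rightarrow> bool" where
  "countable_hahn_pair X g h \<longleftrightarrow>
     (\<exists>(gs::nat \<Rightarrow> _) (hs::nat \<Rightarrow> _).
        (\<forall>n. continuous_map X euclidean (gs n)) \<and> (\<forall>n. continuous_map X euclidean (hs n)) \<and>
        (\<forall>x\<in>topspace X. g x = (INF n. gs n x) \<and> h x = (SUP n. hs n x) \<and> g x \<le> h x))"

definition stable_hahn_pair :: "'a topology \<Rightarrow> ('a \<Rightarrow> ereal) \<Rightarrow> ('a \<Rightarrow> ereal) \<Rightarrow> bool" where
  "stable_hahn_pair X g h \<longleftrightarrow>
     (\<exists>u::nat \<Rightarrow> _.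
        (\<forall>n. continuous_map X euclidean (u n)) \<and>
        (\<forall>x\<in>topspace X. (\<exists>n. g x = u n x) \<and> (\<forall>n. g x \<le> u n x) \<and>
                           (\<exists>n. h x = u n x) \<and> (\<forall>n. u n x \<le> h x)))"

definition stably_converges :: "'a topology \<Rightarrow> (nat \<Rightarrow> 'a \<Rightarrow> 'b) \<Rightarrow> ('a \<Rightarrow> 'b) \<Rightarrow> bool" where
  "stably_converges X fs f \<longleftrightarrow> (\<forall>x\<in>topspace X. \<exists>n. \<forall>k\<ge>n. fs k x = f x)"

definition first_stable_baire :: "'a topology \<Rightarrow> ('a \<Rightarrow> ereal) \<Rightarrow> bool" where
  "first_stable_baire X f \<longleftrightarrow>
     (\<exists>fs::nat \<Rightarrow> _. (\<forall>n. continuous_map X euclidean (fs n)) \<and> stably_converges X fs f)"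

definition sigma_continuous :: "'a topology \<Rightarrow> ('a \<Rightarrow> ereal) \<Rightarrow> bool" where
  "sigma_continuous X f \<longleftrightarrow>
     (\<exists>C::nat \<Rightarrow> _. (\<forall>n. closedin X (C n)) \<and> (\<Union>n. C n) = topspace X \<and>
        (\<forall>n. continuous_map (subtopology X (C n)) euclidean f))"

end

theory Submission
  imports Defs
begin

(* A stable pair of Hahn (g, h) is the same as an attained pointwise minimum g and an attained
   pointwise maximum h of countably many continuous functions together with one continuous
   function c between them: clipping the two sequences at c and interleaving them gives a single
   sequence. Attained minima are upper semicontinuous and are stable limits of their running
   minima, and a stable limit of continuous functions is continuous on each of the closed sets
   on which the sequence has settled. This gives (i) => (ii), (iii), (iv).

   On a normal space the Katetov-Tong insertion theorem provides c. Applied to g and to the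
   function that equals g on a closed set C and +infinity off C, it also extends g|C, when this
   is continuous, to a continuous function above g; so a sigma-continuous usc function is an
   attained minimum of continuous functions, and (iv) => (i). The insertion theorem is proved
   for bounded real functions by successive approximation with finite sums of Urysohn
   functions, and transported to the extended reals along an order isomorphism with [-1, 1].

   For (ii) => (i) on an arbitrary space, the countably many continuous functions witnessing
   (ii) factor through a map onto a subspace Y of the metrizable space [-1, 1]^N. The pair
   descends to a countable pair of Hahn on Y whose members are of the first stable Baire class;
   the normal case applies on Y, and the stable pair obtained there pulls back. *)

section \<open>An order isomorphism between \<open>ereal\<close> and \<open>[-1, 1]\<close>\<close>

definition squash :: "ereal \<Rightarrow> real" where
  "squash x = (case x of ereal r \<Rightarrow> r / (1 + \<bar>r\<bar>) | PInfty \<Rightarrow> 1 | MInfty \<Rightarrow> -1)"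

definition unsquash :: "real \<Rightarrow> ereal" where
  "unsquash s = (if 1 \<le> s then \<infinity> else if s \<le> -1 then -\<infinity> else ereal (s / (1 - \<bar>s\<bar>)))"

lemma squash_ereal_bounds: "-1 < squash (ereal r)" "squash (ereal r) < 1"
  by (auto simp: squash_def divide_simps)

lemma squash_bounds: "-1 \<le> squash x" "squash x \<le> 1"
  by (cases x; auto simp: squash_def divide_simps)+

lemma strict_mono_squash: "strict_mono squash"
proof
  fix x y :: ereal
  assume "x < y"
  then show "squash x < squash y"
  proof (cases x; cases y)
    fix r s assume "x = ereal r" "y = ereal s"
    with \<open>x < y\<close> have "r < s" by simp
    then have "r * (1 + \<bar>s\<bar>) < s * (1 + \<bar>r\<bar>)"
      using mult_nonpos_nonneg[of r s] by (auto simp: abs_if algebra_simps)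
    then show ?thesis
      using \<open>x = ereal r\<close> \<open>y = ereal s\<close> by (simp add: squash_def divide_simps add_pos_nonneg)
  qed (use squash_ereal_bounds in \<open>auto simp: squash_def\<close>)
qed

lemma squash_less_iff [simp]: "squash x < squash y \<longleftrightarrow> x < y"
  using strict_mono_squash by (rule strict_mono_less)

lemma squash_le_iff [simp]: "squash x \<le> squash y \<longleftrightarrow> x \<le> y"
  using strict_mono_squash by (rule strict_mono_less_eq)

lemma unsquash_squash [simp]: "unsquash (squash x) = x"
proof (cases x)
  case (real r)
  have "1 - \<bar>r / (1 + \<bar>r\<bar>)\<bar> = 1 / (1 + \<bar>r\<bar>)"
    by (simp add: divide_simps)
  then show ?thesis
    using real squash_ereal_bounds[of r] by (simp add: squash_def unsquash_def)
qed (auto simp: squash_def unsquash_def)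

lemma squash_unsquash:
  assumes "-1 \<le> s" "s \<le> 1"
  shows "squash (unsquash s) = s"
proof (cases "\<bar>s\<bar> < 1")
  case True
  then have "1 + \<bar>s / (1 - \<bar>s\<bar>)\<bar> = 1 / (1 - \<bar>s\<bar>)"
    by (simp add: divide_simps)
  then show ?thesis
    using True by (auto simp: squash_def unsquash_def)
qed (use assms in \<open>auto simp: squash_def unsquash_def\<close>)

lemma unsquash_mono:
  assumes "s \<le> t"
  shows "unsquash s \<le> unsquash t"
proof (cases "1 \<le> t \<or> s \<le> -1")
  case False
  with assms have "squash (unsquash s) \<le> squash (unsquash t)"
    by (simp add: squash_unsquash)
  then show ?thesis
    by simp
qed (auto simp: unsquash_def)

lemma squash_less_iff_less_unsquash:
  assumes "t \<le> 1"
  shows "squash y < t \<longleftrightarrow> y < unsquash t"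
proof (cases "t < -1")
  case True
  then show ?thesis
    using squash_bounds(1)[of y] by (auto simp: unsquash_def)
next
  case False
  then have "t = squash (unsquash t)"
    using assms by (simp add: squash_unsquash)
  then show ?thesis
    by (metis squash_less_iff)
qed

lemma less_squash_iff_unsquash_less:
  assumes "-1 \<le> t"
  shows "t < squash y \<longleftrightarrow> unsquash t < y"
proof (cases "1 < t")
  case True
  then show ?thesis
    using squash_bounds(2)[of y] by (auto simp: unsquash_def)
next
  case False
  then have "t = squash (unsquash t)"
    using assms by (simp add: squash_unsquash)
  then show ?thesis
    by (metis squash_less_iff)
qed

section \<open>Semicontinuity of extended-real functions\<close>

lemma continuous_map_ereal_iff_usc_lsc:
  "continuous_map X euclidean f \<longleftrightarrow> usc_map X f \<and> lsc_map X f"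
  by (simp add: continuous_map_upper_lower_semicontinuous_lt usc_map_def lsc_map_def conj_commute)

lemma continuous_map_min:
  fixes f g :: "'a \<Rightarrow> 'b::linorder_topology"
  shows "continuous_map X euclidean f \<Longrightarrow> continuous_map X euclidean g \<Longrightarrow>
    continuous_map X euclidean (\<lambda>x. min (f x) (g x))"
  by (simp add: continuous_map_atin tendsto_min)

lemma continuous_map_max:
  fixes f g :: "'a \<Rightarrow> 'b::linorder_topology"
  shows "continuous_map X euclidean f \<Longrightarrow> continuous_map X euclidean g \<Longrightarrow>
    continuous_map X euclidean (\<lambda>x. max (f x) (g x))"
  by (simp add: continuous_map_atin tendsto_max)

lemma continuous_map_ereal_uminus:
  fixes f :: "'a \<Rightarrow> ereal"
  shows "continuous_map X euclidean f \<Longrightarrow> continuous_map X euclidean (\<lambda>x. - f x)"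
  by (simp add: continuous_map_atin)

lemma usc_map_uminus_iff: "usc_map X (\<lambda>x. - f x) \<longleftrightarrow> lsc_map X f"
proof -
  have eq: "{x \<in> topspace X. - f x < t} = {x \<in> topspace X. - t < f x}" for t
    by (simp only: ereal_uminus_less_reorder)
  show ?thesis
    unfolding usc_map_def lsc_map_def eq
  proof (intro iffI allI)
    fix t
    assume "\<forall>t. openin X {x \<in> topspace X. - t < f x}"
    then have "openin X {x \<in> topspace X. - (- t) < f x}"
      by blast
    then show "openin X {x \<in> topspace X. t < f x}"
      by simp
  qed blast
qed

lemma usc_map_INF_continuous:
  assumes "\<And>n. continuous_map X euclidean (u n)" and "\<And>x. x \<in> topspace X \<Longrightarrow> g x = (INF n. u n x)"
  shows "usc_map X g"
  unfolding usc_map_def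
proof
  fix t
  have "g x < t \<longleftrightarrow> (\<exists>n. u n x < t)" if "x \<in> topspace X" for x
    using assms(2)[OF that] by (simp add: INF_less_iff)
  then have "{x \<in> topspace X. g x < t} = (\<Union>n. {x \<in> topspace X. u n x < t})"
    by blast
  moreover have "openin X {x \<in> topspace X. u n x < t}" for n
    using assms(1) by (simp add: continuous_map_upper_lower_semicontinuous_lt)
  ultimately show "openin X {x \<in> topspace X. g x < t}"
    by auto
qed

lemma lsc_map_SUP_continuous:
  assumes "\<And>n. continuous_map X euclidean (u n)" and "\<And>x. x \<in> topspace X \<Longrightarrow> h x = (SUP n. u n x)"
  shows "lsc_map X h"
  unfolding lsc_map_def
proof
  fix t
  have "t < h x \<longleftrightarrow> (\<exists>n. t < u n x)" if "x \<in> topspace X" for x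
    using assms(2)[OF that] by (simp add: less_SUP_iff)
  then have "{x \<in> topspace X. t < h x} = (\<Union>n. {x \<in> topspace X. t < u n x})"
    by blast
  moreover have "openin X {x \<in> topspace X. t < u n x}" for n
    using assms(1) by (simp add: continuous_map_upper_lower_semicontinuous_lt)
  ultimately show "openin X {x \<in> topspace X. t < h x}"
    by auto
qed

lemma openin_squash_less:
  assumes "usc_map X g"
  shows "openin X {x \<in> topspace X. squash (g x) < t}"
proof (cases "t \<le> 1")
  case True
  then show ?thesis
    using assms by (simp add: squash_less_iff_less_unsquash usc_map_def)
next
  case False
  then have "squash (g x) < t" for x
    using squash_bounds(2)[of "g x"] by linarith
  then show ?thesis
    by simp
qed

lemma openin_less_squash:
  assumes "lsc_map X h"
  shows "openin X {x \<in> topspace X. t < squash (h x)}"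
proof (cases "-1 \<le> t")
  case True
  then show ?thesis
    using assms by (simp add: less_squash_iff_unsquash_less lsc_map_def)
next
  case False
  then have "t < squash (h x)" for x
    using squash_bounds(1)[of "h x"] by linarith
  then show ?thesis
    by simp
qed

lemma continuous_map_squash:
  assumes "continuous_map X euclidean f"
  shows "continuous_map X euclideanreal (\<lambda>x. squash (f x))"
proof -
  have "usc_map X f" "lsc_map X f"
    using assms by (simp_all add: continuous_map_ereal_iff_usc_lsc)
  then show ?thesis
    unfolding continuous_map_upper_lower_semicontinuous_lt
    by (simp add: openin_squash_less openin_less_squash)
qed

lemma continuous_map_unsquash:
  assumes F: "continuous_map X euclideanreal F"
    and bounds: "\<And>x. x \<in> topspace X \<Longrightarrow> -1 \<le> F x \<and> F x \<le> 1"
  shows "continuous_map X euclidean (\<lambda>x. unsquash (F x))"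
proof -
  have "unsquash (F x) < t \<longleftrightarrow> F x < squash t" "t < unsquash (F x) \<longleftrightarrow> squash t < F x"
    if "x \<in> topspace X" for x t
  proof -
    have "F x = squash (unsquash (F x))"
      using bounds[OF that] by (simp add: squash_unsquash)
    then show "unsquash (F x) < t \<longleftrightarrow> F x < squash t" "t < unsquash (F x) \<longleftrightarrow> squash t < F x"
      by (metis squash_less_iff)+
  qed
  then have "{x \<in> topspace X. unsquash (F x) < t} = {x \<in> topspace X. F x < squash t}"
    and "{x \<in> topspace X. t < unsquash (F x)} = {x \<in> topspace X. squash t < F x}" for t
    by auto
  with F show ?thesis
    by (simp add: continuous_map_upper_lower_semicontinuous_lt)
qed

section \<open>The Katetov-Tong insertion theorem\<close>

lemma staircase_sum_lower:
  fixes d :: "nat \<Rightarrow> real"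
  assumes "\<And>i. i < N \<Longrightarrow> 0 \<le> d i"
    and "\<And>i. i < N \<Longrightarrow> lo + real (Suc i) * \<delta> \<le> a \<Longrightarrow> d i = \<delta>"
  shows "min (a - \<delta>) (lo + real N * \<delta>) \<le> lo + (\<Sum>i<N. d i)"
  using assms
proof (induction N)
  case (Suc N)
  have IH: "min (a - \<delta>) (lo + real N * \<delta>) \<le> lo + (\<Sum>i<N. d i)"
    using Suc by simp
  show ?case
  proof (cases "lo + real (Suc N) * \<delta> \<le> a")
    case True
    then have "d N = \<delta>"
      using Suc.prems(2) by simp
    then show ?thesis
      using IH True by (simp add: algebra_simps min_def split: if_splits)
  next
    case False
    then show ?thesis
      using IH Suc.prems(1)[of N] by (simp add: algebra_simps min_def split: if_splits)
  qed
qed simp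

lemma staircase_sum_upper:
  fixes d :: "nat \<Rightarrow> real"
  assumes "\<And>i. i < N \<Longrightarrow> d i \<le> \<delta>"
    and "\<And>i. i < N \<Longrightarrow> b \<le> lo + real i * \<delta> \<Longrightarrow> d i = 0"
  shows "lo + (\<Sum>i<N. d i) \<le> max (b + \<delta>) lo"
  using assms
proof (induction N)
  case (Suc N)
  show ?case
  proof (cases "b \<le> lo + real N * \<delta>")
    case True
    then show ?thesis
      using Suc by simp
  next
    case False
    have "(\<Sum>i<N. d i) \<le> real N * \<delta>"
      using sum_bounded_above[of "{..<N}" d \<delta>] Suc.prems(1) by simp
    then show ?thesis
      using False Suc.prems(1)[of N] by simp
  qed
qed simp

lemma Urysohn_steps:
  fixes g h :: "'a \<Rightarrow> real"
  assumes X: "normal_space X"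
    and g: "\<And>t. openin X {x \<in> topspace X. g x < t}"
    and h: "\<And>t. openin X {x \<in> topspace X. t < h x}"
    and le: "\<And>x. x \<in> topspace X \<Longrightarrow> g x \<le> h x" and "\<delta> > 0"
  obtains D :: "nat \<Rightarrow> 'a \<Rightarrow> real" where "\<And>i. continuous_map X euclideanreal (D i)"
    "\<And>i x. x \<in> topspace X \<Longrightarrow> 0 \<le> D i x \<and> D i x \<le> \<delta>"
    "\<And>i x. x \<in> topspace X \<Longrightarrow> lo + real (Suc i) * \<delta> \<le> g x \<Longrightarrow> D i x = \<delta>"
    "\<And>i x. x \<in> topspace X \<Longrightarrow> h x \<le> lo + real i * \<delta> \<Longrightarrow> D i x = 0"
proof -
  define A where "A i = {x \<in> topspace X. lo + real (Suc i) * \<delta> \<le> g x}" for i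
  define B where "B i = {x \<in> topspace X. h x \<le> lo + real i * \<delta>}" for i
  have AB: "closedin X (A i)" "closedin X (B i)" "disjnt (B i) (A i)" for i
  proof -
    have "topspace X - A i = {x \<in> topspace X. g x < lo + real (Suc i) * \<delta>}"
      "topspace X - B i = {x \<in> topspace X. lo + real i * \<delta> < h x}"
      by (auto simp: A_def B_def)
    then show "closedin X (A i)" "closedin X (B i)"
      using g h by (auto simp: closedin_def A_def B_def)
    show "disjnt (B i) (A i)"
      using le \<open>\<delta> > 0\<close> by (fastforce simp: disjnt_def A_def B_def algebra_simps)
  qed
  have "\<exists>D. continuous_map X (top_of_set {0..\<delta>}) D \<and> D ` B i \<subseteq> {0} \<and> D ` A i \<subseteq> {\<delta>}" for i
    using Urysohn_lemma[OF X AB(2,1,3)] \<open>\<delta> > 0\<close> by (metis less_eq_real_def)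
  then obtain D :: "nat \<Rightarrow> 'a \<Rightarrow> real" where D: "\<And>i. continuous_map X (top_of_set {0..\<delta>}) (D i)"
    "\<And>i. D i ` B i \<subseteq> {0}" "\<And>i. D i ` A i \<subseteq> {\<delta>}"
    by metis
  have "continuous_map X euclideanreal (D i)" for i
    using D(1) by (simp add: continuous_map_in_subtopology)
  moreover have "0 \<le> D i x \<and> D i x \<le> \<delta>" if "x \<in> topspace X" for i x
    using D(1)[of i] that by (auto simp: continuous_map_def)
  moreover have "D i x = \<delta>" if "x \<in> topspace X" "lo + real (Suc i) * \<delta> \<le> g x" for i x
    using D(3)[of i] that by (auto simp: A_def)
  moreover have "D i x = 0" if "x \<in> topspace X" "h x \<le> lo + real i * \<delta>" for i x
    using D(2)[of i] that by (auto simp: B_def)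
  ultimately show thesis
    using that by blast
qed

lemma approximate_insertion:
  fixes g h :: "'a \<Rightarrow> real"
  assumes X: "normal_space X"
    and g: "\<And>t. openin X {x \<in> topspace X. g x < t}"
    and h: "\<And>t. openin X {x \<in> topspace X. t < h x}"
    and bounds: "\<And>x. x \<in> topspace X \<Longrightarrow> lo \<le> g x \<and> g x \<le> h x \<and> h x \<le> hi"
    and "\<delta> > 0"
  obtains f where "continuous_map X euclideanreal f"
    "\<And>x. x \<in> topspace X \<Longrightarrow> g x - \<delta> \<le> f x \<and> f x \<le> h x + \<delta>"
proof -
  have "\<And>x. x \<in> topspace X \<Longrightarrow> g x \<le> h x"
    using bounds by blast
  then obtain D :: "nat \<Rightarrow> 'a \<Rightarrow> real" where D: "\<And>i. continuous_map X euclideanreal (D i)"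
    and D_bounds: "\<And>i x. x \<in> topspace X \<Longrightarrow> 0 \<le> D i x \<and> D i x \<le> \<delta>"
    and D_top: "\<And>i x. x \<in> topspace X \<Longrightarrow> lo + real (Suc i) * \<delta> \<le> g x \<Longrightarrow> D i x = \<delta>"
    and D_bottom: "\<And>i x. x \<in> topspace X \<Longrightarrow> h x \<le> lo + real i * \<delta> \<Longrightarrow> D i x = 0"
    using Urysohn_steps[OF X g h _ \<open>\<delta> > 0\<close>, of lo] by blast
  define N where "N = nat \<lceil>(hi - lo) / \<delta>\<rceil>"
  show thesis
  proof
    show "continuous_map X euclideanreal (\<lambda>x. lo + (\<Sum>i<N. D i x))"
      using D by (intro continuous_map_add continuous_map_sum) auto
  next
    fix x
    assume x: "x \<in> topspace X"
    have "(hi - lo) / \<delta> \<le> real N"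
      unfolding N_def by linarith
    then have "g x \<le> lo + real N * \<delta>"
      using bounds[OF x] \<open>\<delta> > 0\<close> by (simp add: divide_le_eq algebra_simps)
    moreover have "min (g x - \<delta>) (lo + real N * \<delta>) \<le> lo + (\<Sum>i<N. D i x)"
      using D_bounds D_top x by (intro staircase_sum_lower) auto
    moreover have "lo + (\<Sum>i<N. D i x) \<le> max (h x + \<delta>) lo"
      using D_bounds D_bottom x by (intro staircase_sum_upper) auto
    ultimately show "g x - \<delta> \<le> lo + (\<Sum>i<N. D i x) \<and> lo + (\<Sum>i<N. D i x) \<le> h x + \<delta>"
      using bounds[OF x] \<open>\<delta> > 0\<close> by linarith
  qed
qed

lemma geometric_increments_tail:
  fixes a :: "nat \<Rightarrow> real"
  assumes step: "\<And>n. \<bar>a (Suc n) - a n\<bar> \<le> c * (1/2) ^ n" and "m \<le> n"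
  shows "\<bar>a n - a m\<bar> \<le> 2 * \<bar>c\<bar> * (1/2) ^ m"
proof -
  have "\<bar>a n - a m\<bar> \<le> 2 * c * ((1/2) ^ m - (1/2) ^ n)"
    using \<open>m \<le> n\<close>
  proof (induction n rule: dec_induct)
    case (step n)
    have "\<bar>a (Suc n) - a m\<bar> \<le> \<bar>a (Suc n) - a n\<bar> + \<bar>a n - a m\<bar>"
      by linarith
    also have "\<dots> \<le> c * (1/2) ^ n + 2 * c * ((1/2) ^ m - (1/2) ^ n)"
      using step.IH assms(1)[of n] by linarith
    finally show ?case
      by (simp add: algebra_simps)
  qed simp
  also have "\<dots> \<le> 2 * \<bar>c\<bar> * ((1/2) ^ m - (1/2) ^ n)"
    using \<open>m \<le> n\<close> by (intro mult_right_mono) (auto simp: power_decreasing)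
  also have "\<dots> \<le> 2 * \<bar>c\<bar> * (1/2) ^ m"
    by (intro mult_left_mono) auto
  finally show ?thesis .
qed

lemma continuous_map_limit_geometric_increments:
  fixes F :: "nat \<Rightarrow> 'a \<Rightarrow> real"
  assumes cont: "\<And>n. continuous_map X euclideanreal (F n)"
    and step: "\<And>n x. x \<in> topspace X \<Longrightarrow> \<bar>F (Suc n) x - F n x\<bar> \<le> c * (1/2) ^ n"
  obtains L where "continuous_map X euclideanreal L" "\<And>x. x \<in> topspace X \<Longrightarrow> (\<lambda>n. F n x) \<longlonglongrightarrow> L x"
proof -
  have "(\<lambda>n. 2 * \<bar>c\<bar> * (1/2) ^ n :: real) \<longlonglongrightarrow> 0"
    by (intro tendsto_mult_right_zero LIMSEQ_power_zero) simp
  have uniformly_Cauchy: "\<exists>N. \<forall>m n x. N \<le> m \<longrightarrow> N \<le> n \<longrightarrow> x \<in> topspace X \<longrightarrow> dist (F m x) (F n x) < \<epsilon>"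
    if "\<epsilon> > 0" for \<epsilon>
  proof -
    obtain N where N: "\<And>n. N \<le> n \<Longrightarrow> 2 * \<bar>c\<bar> * (1/2) ^ n < \<epsilon>"
      using order_tendstoD(2)[OF \<open>(\<lambda>n. 2 * \<bar>c\<bar> * (1/2) ^ n) \<longlonglongrightarrow> 0\<close> \<open>\<epsilon> > 0\<close>]
      by (auto simp: eventually_sequentially)
    have "\<bar>F n x - F m x\<bar> < \<epsilon>" if "N \<le> m" "m \<le> n" "x \<in> topspace X" for m n x
      using geometric_increments_tail[of "\<lambda>n. F n x", OF step[OF \<open>x \<in> topspace X\<close>] \<open>m \<le> n\<close>]
        N[OF \<open>N \<le> m\<close>] by linarith
    then show ?thesis
      by (metis abs_minus_commute dist_real_def nle_le)
  qed
  obtain L where L: "continuous_map X euclideanreal L"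
    and uniform: "\<And>\<epsilon>. 0 < \<epsilon> \<Longrightarrow> \<forall>\<^sub>F n in sequentially. \<forall>x\<in>topspace X. dist (F n x) (L x) < \<epsilon>"
    by (rule Met_TC.continuous_map_uniformly_Cauchy_limit[OF _ _ uniformly_Cauchy]) (auto simp: cont)
  show thesis
  proof (rule that[OF L])
    fix x
    assume "x \<in> topspace X"
    then show "(\<lambda>n. F n x) \<longlonglongrightarrow> L x"
      unfolding tendsto_iff using uniform by (fastforce elim: eventually_mono)
  qed
qed

lemma refine_approximate_insertion:
  fixes g h f :: "'a \<Rightarrow> real"
  assumes X: "normal_space X"
    and g: "\<And>t. openin X {x \<in> topspace X. g x < t}"
    and h: "\<And>t. openin X {x \<in> topspace X. t < h x}"
    and bounds: "\<And>x. x \<in> topspace X \<Longrightarrow> lo \<le> g x \<and> g x \<le> h x \<and> h x \<le> hi"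
    and "e > 0"
    and f: "continuous_map X euclideanreal f"
    and f_approx: "\<And>x. x \<in> topspace X \<Longrightarrow> g x - e \<le> f x \<and> f x \<le> h x + e"
  obtains f' where "continuous_map X euclideanreal f'"
    "\<And>x. x \<in> topspace X \<Longrightarrow> g x - e/2 \<le> f' x \<and> f' x \<le> h x + e/2 \<and> \<bar>f' x - f x\<bar> \<le> 2 * e"
proof -
  \<comment> \<open>Insert with precision \<open>e/4\<close> between \<open>g\<close> and \<open>h\<close> widened by \<open>e/4\<close>, but clipped to
      the \<open>e\<close>-band around \<open>f\<close>, so that the new approximation stays close to \<open>f\<close>.\<close>
  define g' where "g' x = max (g x - e/4) (f x - e)" for x
  define h' where "h' x = min (h x + e/4) (f x + e)" for x
  have g'_usc: "openin X {x \<in> topspace X. g' x < t}" for t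
  proof -
    have "{x \<in> topspace X. g' x < t} = {x \<in> topspace X. g x < t + e/4} \<inter> {x \<in> topspace X. f x < t + e}"
      by (auto simp: g'_def)
    then show ?thesis
      using g f by (auto simp: continuous_map_upper_lower_semicontinuous_lt)
  qed
  have h'_lsc: "openin X {x \<in> topspace X. t < h' x}" for t
  proof -
    have "{x \<in> topspace X. t < h' x} = {x \<in> topspace X. t - e/4 < h x} \<inter> {x \<in> topspace X. t - e < f x}"
      by (auto simp: h'_def)
    then show ?thesis
      using h f by (auto simp: continuous_map_upper_lower_semicontinuous_lt)
  qed
  have g'h'_bounds: "lo - e/4 \<le> g' x \<and> g' x \<le> h' x \<and> h' x \<le> hi + e/4" if "x \<in> topspace X" for x
    using bounds[OF that] f_approx[OF that] \<open>e > 0\<close> by (auto simp: g'_def h'_def)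
  obtain f' where f': "continuous_map X euclideanreal f'"
    and f'_approx: "\<And>x. x \<in> topspace X \<Longrightarrow> g' x - e/4 \<le> f' x \<and> f' x \<le> h' x + e/4"
    using approximate_insertion[OF X g'_usc h'_lsc g'h'_bounds] \<open>e > 0\<close>
    by (metis zero_less_divide_iff zero_less_numeral)
  show thesis
  proof (rule that[OF f'])
    fix x
    assume "x \<in> topspace X"
    then show "g x - e/2 \<le> f' x \<and> f' x \<le> h x + e/2 \<and> \<bar>f' x - f x\<bar> \<le> 2 * e"
      using f'_approx[of x] \<open>e > 0\<close> by (auto simp: g'_def h'_def)
  qed
qed

lemma Katetov_Tong_insertion_bounded:
  fixes g h :: "'a \<Rightarrow> real"
  assumes X: "normal_space X"
    and g: "\<And>t. openin X {x \<in> topspace X. g x < t}"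
    and h: "\<And>t. openin X {x \<in> topspace X. t < h x}"
    and bounds: "\<And>x. x \<in> topspace X \<Longrightarrow> lo \<le> g x \<and> g x \<le> h x \<and> h x \<le> hi"
  obtains f where "continuous_map X euclideanreal f" "\<And>x. x \<in> topspace X \<Longrightarrow> g x \<le> f x \<and> f x \<le> h x"
proof -
  define c where "c = \<bar>hi - lo\<bar> + 1"
  have "c > 0"
    by (simp add: c_def add_nonneg_pos)
  define approx where "approx n f \<longleftrightarrow> continuous_map X euclideanreal f \<and>
      (\<forall>x\<in>topspace X. g x - c * (1/2) ^ n \<le> f x \<and> f x \<le> h x + c * (1/2) ^ n)" for n f
  have "\<exists>F. \<forall>n. approx n (F n) \<and> (\<forall>x\<in>topspace X. \<bar>F (Suc n) x - F n x\<bar> \<le> 2 * c * (1/2) ^ n)"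
  proof (rule dependent_nat_choice)
    show "\<exists>f. approx 0 f"
      using bounds by (intro exI[of _ "\<lambda>x. lo"]) (fastforce simp: approx_def c_def)
  next
    fix f n
    assume "approx n f"
    then obtain f' where "continuous_map X euclideanreal f'" and
      "\<And>x. x \<in> topspace X \<Longrightarrow> g x - c * (1/2) ^ n / 2 \<le> f' x \<and> f' x \<le> h x + c * (1/2) ^ n / 2 \<and>
         \<bar>f' x - f x\<bar> \<le> 2 * c * (1/2) ^ n"
      using refine_approximate_insertion[OF X g h bounds, of "c * (1/2) ^ n" f] \<open>c > 0\<close>
      unfolding approx_def by (auto simp: mult.assoc)
    then show "\<exists>f'. approx (Suc n) f' \<and> (\<forall>x\<in>topspace X. \<bar>f' x - f x\<bar> \<le> 2 * c * (1/2) ^ n)"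
      by (intro exI[of _ f']) (auto simp: approx_def)
  qed
  then obtain F where F: "\<And>n. approx n (F n)"
    and F_step: "\<And>n x. x \<in> topspace X \<Longrightarrow> \<bar>F (Suc n) x - F n x\<bar> \<le> 2 * c * (1/2) ^ n"
    by blast
  obtain L where L: "continuous_map X euclideanreal L"
    and lim: "\<And>x. x \<in> topspace X \<Longrightarrow> (\<lambda>n. F n x) \<longlonglongrightarrow> L x"
    using continuous_map_limit_geometric_increments[of X F "2 * c"] F F_step unfolding approx_def by blast
  have margin: "(\<lambda>n. c * (1/2) ^ n :: real) \<longlonglongrightarrow> 0"
    by (intro tendsto_mult_right_zero LIMSEQ_power_zero) simp
  show thesis
  proof (rule that[OF L])
    fix x
    assume x: "x \<in> topspace X"
    have "(\<lambda>n. g x - c * (1/2) ^ n) \<longlonglongrightarrow> g x" "(\<lambda>n. h x + c * (1/2) ^ n) \<longlonglongrightarrow> h x"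
      using tendsto_diff[OF tendsto_const margin] tendsto_add[OF tendsto_const margin] by simp_all
    moreover have "g x - c * (1/2) ^ n \<le> F n x" "F n x \<le> h x + c * (1/2) ^ n" for n
      using F[of n] x unfolding approx_def by auto
    ultimately show "g x \<le> L x \<and> L x \<le> h x"
      using lim[OF x] by (auto intro: LIMSEQ_le)
  qed
qed

theorem Katetov_Tong_insertion:
  fixes g h :: "'a \<Rightarrow> ereal"
  assumes X: "normal_space X" and g: "usc_map X g" and h: "lsc_map X h"
    and le: "\<And>x. x \<in> topspace X \<Longrightarrow> g x \<le> h x"
  obtains c where "continuous_map X euclidean c" "\<And>x. x \<in> topspace X \<Longrightarrow> g x \<le> c x \<and> c x \<le> h x"
proof -
  have "-1 \<le> squash (g x) \<and> squash (g x) \<le> squash (h x) \<and> squash (h x) \<le> 1" if "x \<in> topspace X" for x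
    using le[OF that] squash_bounds by simp
  then obtain F where F: "continuous_map X euclideanreal F"
    and between: "\<And>x. x \<in> topspace X \<Longrightarrow> squash (g x) \<le> F x \<and> F x \<le> squash (h x)"
    using Katetov_Tong_insertion_bounded[OF X openin_squash_less[OF g] openin_less_squash[OF h]]
    by metis
  have F_bounds: "-1 \<le> F x \<and> F x \<le> 1" if "x \<in> topspace X" for x
    using between[OF that] squash_bounds[of "g x"] squash_bounds[of "h x"] by linarith
  show thesis
  proof (rule that[OF continuous_map_unsquash[OF F F_bounds]])
    fix x
    assume "x \<in> topspace X"
    then have "unsquash (squash (g x)) \<le> unsquash (F x) \<and> unsquash (F x) \<le> unsquash (squash (h x))"
      using between unsquash_mono by blast
    then show "g x \<le> unsquash (F x) \<and> unsquash (F x) \<le> h x"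
      by simp
  qed
qed

lemma lsc_map_extend_by_infinity:
  fixes g :: "'a \<Rightarrow> ereal"
  assumes C: "closedin X C" and g: "continuous_map (subtopology X C) euclidean g"
  shows "lsc_map X (\<lambda>x. if x \<in> C then g x else \<infinity>)"
  unfolding lsc_map_def
proof
  fix t
  show "openin X {x \<in> topspace X. t < (if x \<in> C then g x else \<infinity>)}"
  proof (cases "t = \<infinity>")
    case False
    have "openin (subtopology X C) {x \<in> topspace (subtopology X C). t < g x}"
      using g by (simp add: continuous_map_upper_lower_semicontinuous_lt)
    then obtain W where W: "openin X W" "{x \<in> topspace (subtopology X C). t < g x} = W \<inter> C"
      by (auto simp: openin_subtopology)
    have "{x \<in> topspace X. t < (if x \<in> C then g x else \<infinity>)} = (topspace X - C) \<union> (W \<inter> C)"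
      using W(2) False by (auto simp: less_top)
    also have "\<dots> = (topspace X - C) \<union> W"
      using openin_subset[OF W(1)] by blast
    finally have "{x \<in> topspace X. t < (if x \<in> C then g x else \<infinity>)} = (topspace X - C) \<union> W" .
    then show ?thesis
      using W(1) C by (auto simp: closedin_def)
  qed simp
qed

lemma continuous_extension_above:
  fixes g :: "'a \<Rightarrow> ereal"
  assumes X: "normal_space X" and "usc_map X g"
    and C: "closedin X C" and "continuous_map (subtopology X C) euclidean g"
  shows "\<exists>u. continuous_map X euclidean u \<and> (\<forall>x\<in>topspace X. g x \<le> u x) \<and> (\<forall>x\<in>C. u x = g x)"
proof -
  have "g x \<le> (if x \<in> C then g x else \<infinity>)" for x
    by simp
  then obtain u where u: "continuous_map X euclidean u"
    and between: "\<And>x. x \<in> topspace X \<Longrightarrow> g x \<le> u x \<and> u x \<le> (if x \<in> C then g x else \<infinity>)"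
    using Katetov_Tong_insertion[OF X \<open>usc_map X g\<close> lsc_map_extend_by_infinity[OF assms(3,4)]] by blast
  have "u x = g x" if "x \<in> C" for x
    using between[of x] that closedin_subset[OF C] by (auto intro: order.antisym)
  with u between show ?thesis
    by (intro exI[of _ u]) auto
qed

section \<open>The first stable Baire class and sigma-continuity\<close>

lemma first_stable_baire_uminus:
  assumes "first_stable_baire X f"
  shows "first_stable_baire X (\<lambda>x. - f x)"
proof -
  obtain fs :: "nat \<Rightarrow> 'a \<Rightarrow> ereal" where "\<forall>n. continuous_map X euclidean (fs n)"
    and "stably_converges X fs f"
    using assms unfolding first_stable_baire_def by auto
  then show ?thesis
    unfolding first_stable_baire_def stably_converges_def
    by (intro exI[of _ "\<lambda>n x. - fs n x"]) (auto simp: continuous_map_ereal_uminus)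
qed

lemma Hausdorff_space_euclidean_t2: "Hausdorff_space (euclidean :: 'a::t2_space topology)"
  unfolding Hausdorff_space_def disjnt_def using hausdorff by fastforce

lemma closedin_settled:
  fixes fs :: "nat \<Rightarrow> 'a \<Rightarrow> 'b::t2_space"
  assumes "\<And>k. continuous_map X euclidean (fs k)"
  shows "closedin X {x \<in> topspace X. \<forall>k\<ge>n. fs k x = fs n x}"
proof -
  have "{x \<in> topspace X. \<forall>k\<ge>n. fs k x = fs n x} = (\<Inter>k\<in>{n..}. {x \<in> topspace X. fs k x = fs n x})"
    by auto
  moreover have "closedin X {x \<in> topspace X. fs k x = fs n x}" for k
    by (rule closedin_continuous_maps_eq[OF Hausdorff_space_euclidean_t2 assms assms])
  ultimately show ?thesis
    by (simp add: closedin_INT)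
qed

lemma sigma_continuous_if_first_stable_baire:
  fixes f :: "'a \<Rightarrow> ereal"
  assumes "first_stable_baire X f"
  shows "sigma_continuous X f"
proof -
  obtain fs :: "nat \<Rightarrow> 'a \<Rightarrow> ereal" where fs: "\<And>n. continuous_map X euclidean (fs n)"
    and stable: "stably_converges X fs f"
    using assms unfolding first_stable_baire_def by auto
  define C where "C n = {x \<in> topspace X. \<forall>k\<ge>n. fs k x = fs n x}" for n
  have "closedin X (C n)" for n
    unfolding C_def using fs by (rule closedin_settled)
  moreover have "(\<Union>n. C n) = topspace X"
  proof
    show "topspace X \<subseteq> (\<Union>n. C n)"
    proof
      fix x
      assume "x \<in> topspace X"
      then obtain N where "\<forall>k\<ge>N. fs k x = f x"
        using stable unfolding stably_converges_def by auto
      then have "x \<in> C N"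
        using \<open>x \<in> topspace X\<close> by (simp add: C_def)
      then show "x \<in> (\<Union>n. C n)"
        by auto
    qed
  qed (auto simp: C_def)
  moreover have "continuous_map (subtopology X (C n)) euclidean f" for n
  proof (rule continuous_map_eq)
    show "continuous_map (subtopology X (C n)) euclidean (fs n)"
      using fs by (rule continuous_map_from_subtopology)
    fix x
    assume "x \<in> topspace (subtopology X (C n))"
    then have "x \<in> C n"
      by simp
    then have "x \<in> topspace X" and settled: "\<forall>k\<ge>n. fs k x = fs n x"
      unfolding C_def by blast+
    then obtain N where "\<forall>k\<ge>N. fs k x = f x"
      using stable unfolding stably_converges_def by auto
    then have "fs (max n N) x = f x"
      by simp
    moreover have "fs (max n N) x = fs n x"
      using settled[rule_format, of "max n N"] by simp
    ultimately show "fs n x = f x"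
      by simp
  qed
  ultimately show ?thesis
    unfolding sigma_continuous_def by (intro exI[of _ C]) simp
qed

lemma sigma_continuous_uminus:
  assumes "sigma_continuous X f"
  shows "sigma_continuous X (\<lambda>x. - f x)"
proof -
  obtain C :: "nat \<Rightarrow> 'a set" where "\<forall>n. closedin X (C n)" "(\<Union>n. C n) = topspace X"
    "\<forall>n. continuous_map (subtopology X (C n)) euclidean f"
    using assms unfolding sigma_continuous_def by auto
  then show ?thesis
    unfolding sigma_continuous_def by (intro exI[of _ C]) (simp add: continuous_map_ereal_uminus)
qed

section \<open>Attained minima and maxima of continuous functions\<close>

definition stable_min_of_continuous :: "'a topology \<Rightarrow> ('a \<Rightarrow> ereal) \<Rightarrow> bool" where
  "stable_min_of_continuous X g \<longleftrightarrow>
     (\<exists>u::nat \<Rightarrow> 'a \<Rightarrow> ereal. (\<forall>n. continuous_map X euclidean (u n)) \<and>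
        (\<forall>x\<in>topspace X. (\<exists>n. g x = u n x) \<and> (\<forall>n. g x \<le> u n x)))"

definition stable_max_of_continuous :: "'a topology \<Rightarrow> ('a \<Rightarrow> ereal) \<Rightarrow> bool" where
  "stable_max_of_continuous X h \<longleftrightarrow>
     (\<exists>u::nat \<Rightarrow> 'a \<Rightarrow> ereal. (\<forall>n. continuous_map X euclidean (u n)) \<and>
        (\<forall>x\<in>topspace X. (\<exists>n. h x = u n x) \<and> (\<forall>n. u n x \<le> h x)))"

lemma stable_max_of_continuous_iff_uminus:
  "stable_max_of_continuous X h \<longleftrightarrow> stable_min_of_continuous X (\<lambda>x. - h x)"
proof
  assume "stable_max_of_continuous X h"
  then obtain u :: "nat \<Rightarrow> 'a \<Rightarrow> ereal" where u: "\<forall>n. continuous_map X euclidean (u n)"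
    and attained: "\<forall>x\<in>topspace X. (\<exists>n. h x = u n x) \<and> (\<forall>n. u n x \<le> h x)"
    unfolding stable_max_of_continuous_def by blast
  have "(\<exists>n. - h x = - u n x) \<and> (\<forall>n. - h x \<le> - u n x)" if "x \<in> topspace X" for x
    using attained that by auto
  with u show "stable_min_of_continuous X (\<lambda>x. - h x)"
    unfolding stable_min_of_continuous_def
    by (intro exI[of _ "\<lambda>n x. - u n x"]) (simp add: continuous_map_ereal_uminus)
next
  assume "stable_min_of_continuous X (\<lambda>x. - h x)"
  then obtain u :: "nat \<Rightarrow> 'a \<Rightarrow> ereal" where u: "\<forall>n. continuous_map X euclidean (u n)"
    and attained: "\<forall>x\<in>topspace X. (\<exists>n. - h x = u n x) \<and> (\<forall>n. - h x \<le> u n x)"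
    unfolding stable_min_of_continuous_def by blast
  have "(\<exists>n. h x = - u n x) \<and> (\<forall>n. - u n x \<le> h x)" if "x \<in> topspace X" for x
  proof -
    have "(\<exists>n. - h x = u n x) \<and> (\<forall>n. - h x \<le> u n x)"
      using attained that by (rule bspec)
    then show ?thesis
      by (metis ereal_uminus_uminus ereal_uminus_le_reorder)
  qed
  with u show "stable_max_of_continuous X h"
    unfolding stable_max_of_continuous_def
    by (intro exI[of _ "\<lambda>n x. - u n x"]) (simp add: continuous_map_ereal_uminus)
qed

lemma INF_eq_attained_min:
  fixes g :: "'a::complete_lattice"
  assumes "g = u n" and "\<And>n. g \<le> u n"
  shows "g = (INF n. u n)"
proof (rule antisym)
  show "g \<le> (INF n. u n)"
    using assms(2) by (rule INF_greatest)
  show "(INF n. u n) \<le> g"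
    using INF_lower[of n UNIV u] assms(1) by simp
qed

lemma SUP_eq_attained_max:
  fixes h :: "'a::complete_lattice"
  assumes "h = u n" and "\<And>n. u n \<le> h"
  shows "h = (SUP n. u n)"
proof (rule antisym)
  show "(SUP n. u n) \<le> h"
    using assms(2) by (rule SUP_least)
  show "h \<le> (SUP n. u n)"
    using SUP_upper[of n UNIV u] assms(1) by simp
qed

lemma stable_min_of_continuous_INF:
  assumes "stable_min_of_continuous X g"
  obtains u :: "nat \<Rightarrow> 'a \<Rightarrow> ereal" where "\<And>n. continuous_map X euclidean (u n)"
    "\<And>x. x \<in> topspace X \<Longrightarrow> g x = (INF n. u n x)"
proof -
  obtain u :: "nat \<Rightarrow> 'a \<Rightarrow> ereal" where u: "\<forall>n. continuous_map X euclidean (u n)"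
    and attained: "\<forall>x\<in>topspace X. (\<exists>n. g x = u n x) \<and> (\<forall>n. g x \<le> u n x)"
    using assms unfolding stable_min_of_continuous_def by blast
  have INF_eq: "g x = (INF n. u n x)" if "x \<in> topspace X" for x
  proof -
    have "(\<exists>n. g x = u n x) \<and> (\<forall>n. g x \<le> u n x)"
      using attained that by (rule bspec)
    then obtain m where "g x = u m x" and "\<And>n. g x \<le> u n x"
      by auto
    then show ?thesis
      by (rule INF_eq_attained_min)
  qed
  show thesis
    using u INF_eq by (intro that[of u]) auto
qed

lemma stable_max_of_continuous_SUP:
  assumes "stable_max_of_continuous X h"
  obtains u :: "nat \<Rightarrow> 'a \<Rightarrow> ereal" where "\<And>n. continuous_map X euclidean (u n)"
    "\<And>x. x \<in> topspace X \<Longrightarrow> h x = (SUP n. u n x)"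
proof -
  obtain u :: "nat \<Rightarrow> 'a \<Rightarrow> ereal" where u: "\<forall>n. continuous_map X euclidean (u n)"
    and attained: "\<forall>x\<in>topspace X. (\<exists>n. h x = u n x) \<and> (\<forall>n. u n x \<le> h x)"
    using assms unfolding stable_max_of_continuous_def by blast
  have SUP_eq: "h x = (SUP n. u n x)" if "x \<in> topspace X" for x
  proof -
    have "(\<exists>n. h x = u n x) \<and> (\<forall>n. u n x \<le> h x)"
      using attained that by (rule bspec)
    then obtain m where "h x = u m x" and "\<And>n. u n x \<le> h x"
      by auto
    then show ?thesis
      by (rule SUP_eq_attained_max)
  qed
  show thesis
    using u SUP_eq by (intro that[of u]) auto
qed

lemma usc_map_if_stable_min_of_continuous:
  assumes "stable_min_of_continuous X g"
  shows "usc_map X g"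
  using stable_min_of_continuous_INF[OF assms] usc_map_INF_continuous by metis

lemma lsc_map_if_stable_max_of_continuous:
  assumes "stable_max_of_continuous X h"
  shows "lsc_map X h"
  using stable_max_of_continuous_SUP[OF assms] lsc_map_SUP_continuous by metis

lemma continuous_map_running_Min:
  fixes u :: "nat \<Rightarrow> 'a \<Rightarrow> 'b::linorder_topology"
  assumes "\<And>k. continuous_map X euclidean (u k)"
  shows "continuous_map X euclidean (\<lambda>x. Min ((\<lambda>k. u k x) ` {..n}))"
proof (induction n)
  case 0
  have "(\<lambda>x. Min ((\<lambda>k. u k x) ` {..0})) = u 0"
    by (simp add: fun_eq_iff)
  then show ?case
    using assms by simp
next
  case (Suc n)
  have "(\<lambda>x. Min ((\<lambda>k. u k x) ` {..Suc n})) = (\<lambda>x. min (u (Suc n) x) (Min ((\<lambda>k. u k x) ` {..n})))"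
    by (simp add: atMost_Suc fun_eq_iff)
  then show ?case
    using continuous_map_min[OF assms Suc.IH] by simp
qed

lemma first_stable_baire_if_stable_min_of_continuous:
  assumes "stable_min_of_continuous X g"
  shows "first_stable_baire X g"
proof -
  obtain u :: "nat \<Rightarrow> 'a \<Rightarrow> ereal" where u: "\<And>n. continuous_map X euclidean (u n)"
    and attained: "\<forall>x\<in>topspace X. (\<exists>n. g x = u n x) \<and> (\<forall>n. g x \<le> u n x)"
    using assms unfolding stable_min_of_continuous_def by auto
  define running_min where "running_min n = (\<lambda>x. Min ((\<lambda>k. u k x) ` {..n}))" for n
  have "continuous_map X euclidean (running_min n)" for n
    unfolding running_min_def using u by (rule continuous_map_running_Min)
  moreover have "stably_converges X running_min g"
    unfolding stably_converges_def
  proof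
    fix x
    assume "x \<in> topspace X"
    then have "(\<exists>n. g x = u n x) \<and> (\<forall>n. g x \<le> u n x)"
      using attained by (rule bspec[rotated])
    then obtain m where m: "g x = u m x" and below: "\<And>n. g x \<le> u n x"
      by auto
    have "running_min k x = g x" if "m \<le> k" for k
    proof (rule antisym)
      have "running_min k x \<le> u m x"
        unfolding running_min_def using that by (intro Min_le) auto
      then show "running_min k x \<le> g x"
        using m by simp
      show "g x \<le> running_min k x"
        unfolding running_min_def using below by (intro Min.boundedI) auto
    qed
    then show "\<exists>n. \<forall>k\<ge>n. running_min k x = g x"
      by auto
  qed
  ultimately show ?thesis
    unfolding first_stable_baire_def by auto
qed

lemma first_stable_baire_if_stable_max_of_continuous:
  "stable_max_of_continuous X h \<Longrightarrow> first_stable_baire X h"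
  using first_stable_baire_uminus[of X "\<lambda>x. - h x"]
  by (simp add: stable_max_of_continuous_iff_uminus first_stable_baire_if_stable_min_of_continuous)

lemma stable_min_of_continuous_if_sigma_continuous:
  assumes X: "normal_space X" and "usc_map X g" and "sigma_continuous X g"
  shows "stable_min_of_continuous X g"
proof -
  obtain C :: "nat \<Rightarrow> 'a set" where C: "\<And>n. closedin X (C n)" and cover: "(\<Union>n. C n) = topspace X"
    and cont: "\<And>n. continuous_map (subtopology X (C n)) euclidean g"
    using assms(3) unfolding sigma_continuous_def by auto
  have "\<exists>u. continuous_map X euclidean u \<and> (\<forall>x\<in>topspace X. g x \<le> u x) \<and> (\<forall>x\<in>C n. u x = g x)" for n
    by (rule continuous_extension_above[OF X \<open>usc_map X g\<close> C cont])
  then obtain u :: "nat \<Rightarrow> 'a \<Rightarrow> ereal" where u: "\<And>n. continuous_map X euclidean (u n)"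
    and above: "\<And>n x. x \<in> topspace X \<Longrightarrow> g x \<le> u n x" and agree: "\<And>n x. x \<in> C n \<Longrightarrow> u n x = g x"
    by metis
  have "\<exists>n. g x = u n x" if x: "x \<in> topspace X" for x
  proof -
    obtain n where "x \<in> C n"
      using x cover by auto
    then show ?thesis
      using agree by (intro exI[of _ n]) simp
  qed
  then show ?thesis
    unfolding stable_min_of_continuous_def using u above by (intro exI[of _ u]) auto
qed

lemma stable_max_of_continuous_if_sigma_continuous:
  assumes "normal_space X" and "lsc_map X h" and "sigma_continuous X h"
  shows "stable_max_of_continuous X h"
  using assms stable_min_of_continuous_if_sigma_continuous[of X "\<lambda>x. - h x"]
  by (simp add: stable_max_of_continuous_iff_uminus usc_map_uminus_iff sigma_continuous_uminus)

section \<open>Stable pairs of Hahn\<close>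

lemma stable_hahn_pair_if_envelopes:
  assumes "stable_min_of_continuous X g" and "stable_max_of_continuous X h"
    and c: "continuous_map X euclidean c" and between: "\<And>x. x \<in> topspace X \<Longrightarrow> g x \<le> c x \<and> c x \<le> h x"
  shows "stable_hahn_pair X g h"
proof -
  obtain u v :: "nat \<Rightarrow> 'a \<Rightarrow> ereal" where
    u: "\<forall>n. continuous_map X euclidean (u n)"
      and u_attained: "\<forall>x\<in>topspace X. (\<exists>n. g x = u n x) \<and> (\<forall>n. g x \<le> u n x)"
    and v: "\<forall>n. continuous_map X euclidean (v n)"
      and v_attained: "\<forall>x\<in>topspace X. (\<exists>n. h x = v n x) \<and> (\<forall>n. v n x \<le> h x)"
    using assms(1,2) unfolding stable_min_of_continuous_def stable_max_of_continuous_def by auto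
  \<comment> \<open>Clipping at \<open>c\<close> keeps the minima of the \<open>u\<close>'s and the maxima of the \<open>v\<close>'s attained
      while putting every member of the interleaved sequence between \<open>g\<close> and \<open>h\<close>.\<close>
  define w where "w n = (if even n then (\<lambda>x. min (u (n div 2) x) (c x)) else (\<lambda>x. max (v (n div 2) x) (c x)))"
    for n
  have "continuous_map X euclidean (w n)" for n
    using u v c by (cases "even n") (simp_all add: w_def continuous_map_min continuous_map_max)
  moreover have "(\<exists>n. g x = w n x) \<and> (\<forall>n. g x \<le> w n x) \<and> (\<exists>n. h x = w n x) \<and> (\<forall>n. w n x \<le> h x)"
    if x: "x \<in> topspace X" for x
  proof -
    have gc: "g x \<le> c x" and ch: "c x \<le> h x"
      using between[OF x] by auto
    obtain m where m: "g x = u m x"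
      using u_attained x by auto
    obtain m' where m': "h x = v m' x"
      using v_attained x by auto
    have "g x = w (2 * m) x"
      using m gc by (simp add: w_def min_def)
    moreover have "h x = w (2 * m' + 1) x"
      using m' ch by (simp add: w_def max_def)
    moreover have "g x \<le> w n x" and "w n x \<le> h x" for n
      using u_attained v_attained x gc ch by (auto simp: w_def min_le_iff_disj le_max_iff_disj)
    ultimately show ?thesis
      by auto
  qed
  ultimately show ?thesis
    unfolding stable_hahn_pair_def by (intro exI[of _ w]) auto
qed

lemma stable_hahn_pair_iff_envelopes:
  "stable_hahn_pair X g h \<longleftrightarrow>
     stable_min_of_continuous X g \<and> stable_max_of_continuous X h \<and>
     (\<exists>c. continuous_map X euclidean c \<and> (\<forall>x\<in>topspace X. g x \<le> c x \<and> c x \<le> h x))"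
proof
  assume "stable_hahn_pair X g h"
  then obtain u :: "nat \<Rightarrow> 'a \<Rightarrow> ereal" where u: "\<forall>n. continuous_map X euclidean (u n)"
    and attained: "\<forall>x\<in>topspace X. (\<exists>n. g x = u n x) \<and> (\<forall>n. g x \<le> u n x) \<and>
                                   (\<exists>n. h x = u n x) \<and> (\<forall>n. u n x \<le> h x)"
    unfolding stable_hahn_pair_def by auto
  have "stable_min_of_continuous X g" "stable_max_of_continuous X h"
    unfolding stable_min_of_continuous_def stable_max_of_continuous_def
    using u attained by (intro exI[of _ u]; auto)+
  moreover have "\<forall>x\<in>topspace X. g x \<le> u 0 x \<and> u 0 x \<le> h x"
    using attained by auto
  ultimately show "stable_min_of_continuous X g \<and> stable_max_of_continuous X h \<and>
     (\<exists>c. continuous_map X euclidean c \<and> (\<forall>x\<in>topspace X. g x \<le> c x \<and> c x \<le> h x))"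
    using u by auto
next
  assume "stable_min_of_continuous X g \<and> stable_max_of_continuous X h \<and>
     (\<exists>c. continuous_map X euclidean c \<and> (\<forall>x\<in>topspace X. g x \<le> c x \<and> c x \<le> h x))"
  then show "stable_hahn_pair X g h"
    using stable_hahn_pair_if_envelopes by blast
qed

lemma hahn_pair_if_stable_hahn_pair:
  assumes "stable_hahn_pair X g h"
  shows "hahn_pair X g h"
  using assms
  by (auto simp: hahn_pair_def stable_hahn_pair_iff_envelopes usc_map_if_stable_min_of_continuous
      lsc_map_if_stable_max_of_continuous intro: order.trans)

lemma countable_hahn_pair_if_stable_hahn_pair:
  assumes "stable_hahn_pair X g h"
  shows "countable_hahn_pair X g h"
proof -
  obtain gs :: "nat \<Rightarrow> 'a \<Rightarrow> ereal" where "\<And>n. continuous_map X euclidean (gs n)"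
    "\<And>x. x \<in> topspace X \<Longrightarrow> g x = (INF n. gs n x)"
    using assms stable_min_of_continuous_INF by (auto simp: stable_hahn_pair_iff_envelopes)
  moreover obtain hs :: "nat \<Rightarrow> 'a \<Rightarrow> ereal" where "\<And>n. continuous_map X euclidean (hs n)"
    "\<And>x. x \<in> topspace X \<Longrightarrow> h x = (SUP n. hs n x)"
    using assms stable_max_of_continuous_SUP by (auto simp: stable_hahn_pair_iff_envelopes)
  moreover have "\<forall>x\<in>topspace X. g x \<le> h x"
    using hahn_pair_if_stable_hahn_pair[OF assms] by (simp add: hahn_pair_def)
  ultimately show ?thesis
    unfolding countable_hahn_pair_def by (intro exI[of _ gs] exI[of _ hs]) auto
qed

lemma first_stable_baire_if_stable_hahn_pair:
  assumes "stable_hahn_pair X g h"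
  shows "first_stable_baire X g" "first_stable_baire X h"
  using assms
  by (auto simp: stable_hahn_pair_iff_envelopes first_stable_baire_if_stable_min_of_continuous
      first_stable_baire_if_stable_max_of_continuous)

lemma stable_hahn_pair_if_sigma_continuous:
  assumes X: "normal_space X" and "hahn_pair X g h"
    and "sigma_continuous X g" and "sigma_continuous X h"
  shows "stable_hahn_pair X g h"
proof -
  have g: "usc_map X g" and h: "lsc_map X h" and le: "\<And>x. x \<in> topspace X \<Longrightarrow> g x \<le> h x"
    using \<open>hahn_pair X g h\<close> by (auto simp: hahn_pair_def)
  obtain c where "continuous_map X euclidean c" "\<And>x. x \<in> topspace X \<Longrightarrow> g x \<le> c x \<and> c x \<le> h x"
    using Katetov_Tong_insertion[OF X g h le] by blast
  then show ?thesis
    using stable_hahn_pair_if_envelopes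
      stable_min_of_continuous_if_sigma_continuous[OF X g \<open>sigma_continuous X g\<close>]
      stable_max_of_continuous_if_sigma_continuous[OF X h \<open>sigma_continuous X h\<close>]
    by blast
qed

lemma hahn_pair_if_countable_hahn_pair:
  assumes "countable_hahn_pair X g h"
  shows "hahn_pair X g h"
proof -
  obtain gs hs :: "nat \<Rightarrow> 'a \<Rightarrow> ereal" where "\<forall>n. continuous_map X euclidean (gs n)"
    and "\<forall>n. continuous_map X euclidean (hs n)"
    and "\<forall>x\<in>topspace X. g x = (INF n. gs n x) \<and> h x = (SUP n. hs n x) \<and> g x \<le> h x"
    using assms unfolding countable_hahn_pair_def by auto
  then show ?thesis
    unfolding hahn_pair_def
    by (auto intro: usc_map_INF_continuous[of X gs] lsc_map_SUP_continuous[of X hs])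
qed

lemma stable_hahn_pair_pullback:
  fixes X :: "'a topology" and Y :: "'b topology"
  assumes "stable_hahn_pair Y G H" and \<Phi>: "continuous_map X Y \<Phi>"
    and "\<And>x. x \<in> topspace X \<Longrightarrow> G (\<Phi> x) = g x \<and> H (\<Phi> x) = h x"
  shows "stable_hahn_pair X g h"
proof -
  obtain u :: "nat \<Rightarrow> 'b \<Rightarrow> ereal" where u: "\<forall>n. continuous_map Y euclidean (u n)"
    and attained: "\<forall>y\<in>topspace Y. (\<exists>n. G y = u n y) \<and> (\<forall>n. G y \<le> u n y) \<and>
                                   (\<exists>n. H y = u n y) \<and> (\<forall>n. u n y \<le> H y)"
    using assms(1) unfolding stable_hahn_pair_def by auto
  have "continuous_map X euclidean (u n \<circ> \<Phi>)" for n
    using continuous_map_compose[OF \<Phi>] u by blast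
  moreover have "(\<exists>n. g x = u n (\<Phi> x)) \<and> (\<forall>n. g x \<le> u n (\<Phi> x)) \<and>
      (\<exists>n. h x = u n (\<Phi> x)) \<and> (\<forall>n. u n (\<Phi> x) \<le> h x)" if x: "x \<in> topspace X" for x
  proof -
    have "\<Phi> x \<in> topspace Y"
      using \<Phi> x by (rule continuous_map_image_subset_topspace[THEN subsetD, OF _ imageI])
    with attained have "(\<exists>n. G (\<Phi> x) = u n (\<Phi> x)) \<and> (\<forall>n. G (\<Phi> x) \<le> u n (\<Phi> x)) \<and>
        (\<exists>n. H (\<Phi> x) = u n (\<Phi> x)) \<and> (\<forall>n. u n (\<Phi> x) \<le> H (\<Phi> x))"
      by (rule bspec)
    then show ?thesis
      using assms(3)[OF x] by simp
  qed
  ultimately show ?thesis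
    unfolding stable_hahn_pair_def by (intro exI[of _ "\<lambda>n. u n \<circ> \<Phi>"]) auto
qed

lemma countable_hahn_pair_pushforward:
  fixes us vs :: "nat \<Rightarrow> 'b \<Rightarrow> ereal" and gs hs :: "nat \<Rightarrow> 'a \<Rightarrow> ereal"
  assumes surj: "\<Phi> ` topspace X = topspace Y"
    and "\<And>n. continuous_map Y euclidean (us n)" and "\<And>n. continuous_map Y euclidean (vs n)"
    and "\<And>n x. x \<in> topspace X \<Longrightarrow> us n (\<Phi> x) = gs n x"
    and "\<And>n x. x \<in> topspace X \<Longrightarrow> vs n (\<Phi> x) = hs n x"
    and le: "\<And>x. x \<in> topspace X \<Longrightarrow> (INF n. gs n x) \<le> (SUP n. hs n x)"
  shows "countable_hahn_pair Y (\<lambda>y. INF n. us n y) (\<lambda>y. SUP n. vs n y)"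
proof -
  have "(INF n. us n y) \<le> (SUP n. vs n y)" if "y \<in> topspace Y" for y
  proof -
    obtain x where "x \<in> topspace X" and "y = \<Phi> x"
      using surj \<open>y \<in> topspace Y\<close> by auto
    then show ?thesis
      using le assms(4,5) by simp
  qed
  with assms(2,3) show ?thesis
    unfolding countable_hahn_pair_def by (intro exI[of _ us] exI[of _ vs]) auto
qed

lemma first_stable_baire_pushforward:
  assumes "stably_converges X fs f" and surj: "\<Phi> ` topspace X = topspace Y"
    and "\<And>n. continuous_map Y euclidean (vs n)"
    and "\<And>n x. x \<in> topspace X \<Longrightarrow> vs n (\<Phi> x) = fs n x"
    and "\<And>x. x \<in> topspace X \<Longrightarrow> F (\<Phi> x) = f x"
  shows "first_stable_baire Y F"
proof -
  have "\<exists>N. \<forall>k\<ge>N. vs k y = F y" if "y \<in> topspace Y" for y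
  proof -
    obtain x where x: "x \<in> topspace X" and "y = \<Phi> x"
      using surj \<open>y \<in> topspace Y\<close> by auto
    moreover obtain N where "\<forall>k\<ge>N. fs k x = f x"
      using assms(1) x unfolding stably_converges_def by auto
    ultimately show ?thesis
      using assms(4,5) by auto
  qed
  then show ?thesis
    unfolding first_stable_baire_def stably_converges_def using assms(3) by auto
qed

lemma continuous_maps_factor_through_metrizable:
  fixes F :: "('a \<Rightarrow> ereal) set"
  assumes "countable F" and cont: "\<And>f. f \<in> F \<Longrightarrow> continuous_map X euclidean f"
  obtains Y :: "(('a \<Rightarrow> ereal) \<Rightarrow> real) topology" and \<Phi>
  where "metrizable_space Y" "continuous_map X Y \<Phi>" "\<Phi> ` topspace X = topspace Y"
    "\<And>f. f \<in> F \<Longrightarrow> continuous_map Y euclidean (\<lambda>y. unsquash (y f))"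
    "\<And>f x. f \<in> F \<Longrightarrow> x \<in> topspace X \<Longrightarrow> unsquash (\<Phi> x f) = f x"
proof -
  define \<Phi> where "\<Phi> x = (\<lambda>f\<in>F. squash (f x))" for x
  define P where "P = product_topology (\<lambda>_. euclideanreal) F"
  define Y where "Y = subtopology P (\<Phi> ` topspace X)"
  have "metrizable_space P"
    unfolding P_def using \<open>countable F\<close>
    by (simp add: metrizable_space_product_topology metrizable_space_euclidean countable_subset)
  then have "metrizable_space Y"
    unfolding Y_def by (rule metrizable_space_subtopology)
  moreover have \<Phi>P: "continuous_map X P \<Phi>"
    unfolding P_def continuous_map_componentwise
    using cont by (auto simp: \<Phi>_def continuous_map_squash)
  then have "continuous_map X Y \<Phi>"
    unfolding Y_def by (simp add: continuous_map_in_subtopology)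
  moreover have topY: "topspace Y = \<Phi> ` topspace X"
    unfolding Y_def using continuous_map_image_subset_topspace[OF \<Phi>P] by auto
  moreover have "continuous_map Y euclidean (\<lambda>y. unsquash (y f))" if "f \<in> F" for f
  proof (rule continuous_map_unsquash)
    show "continuous_map Y euclideanreal (\<lambda>y. y f)"
      unfolding Y_def P_def using that
      by (intro continuous_map_from_subtopology continuous_map_product_projection)
    show "-1 \<le> y f \<and> y f \<le> 1" if "y \<in> topspace Y" for y
      using that \<open>f \<in> F\<close> squash_bounds by (auto simp: topY \<Phi>_def)
  qed
  moreover have "unsquash (\<Phi> x f) = f x" if "f \<in> F" for f x
    using that by (simp add: \<Phi>_def)
  ultimately show thesis
    using that by auto
qed

lemma stable_hahn_pair_if_countable_hahn_pair:
  assumes "countable_hahn_pair X g h" and "first_stable_baire X g" and "first_stable_baire X h"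
  shows "stable_hahn_pair X g h"
proof -
  obtain gs hs :: "nat \<Rightarrow> 'a \<Rightarrow> ereal" where gs: "\<forall>n. continuous_map X euclidean (gs n)"
    and hs: "\<forall>n. continuous_map X euclidean (hs n)"
    and envelopes: "\<forall>x\<in>topspace X. g x = (INF n. gs n x) \<and> h x = (SUP n. hs n x) \<and> g x \<le> h x"
    using assms(1) unfolding countable_hahn_pair_def by auto
  obtain p q :: "nat \<Rightarrow> 'a \<Rightarrow> ereal" where p: "\<forall>n. continuous_map X euclidean (p n)"
    and "stably_converges X p g" and q: "\<forall>n. continuous_map X euclidean (q n)"
    and "stably_converges X q h"
    using assms(2,3) unfolding first_stable_baire_def by auto
  define F where "F = range gs \<union> range hs \<union> range p \<union> range q"
  have "countable F" and F_cont: "\<And>f. f \<in> F \<Longrightarrow> continuous_map X euclidean f"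
    using gs hs p q by (auto simp: F_def)
  obtain Y :: "(('a \<Rightarrow> ereal) \<Rightarrow> real) topology" and \<Phi>
    where "metrizable_space Y" and \<Phi>: "continuous_map X Y \<Phi>" and surj: "\<Phi> ` topspace X = topspace Y"
      and v: "\<And>f. f \<in> F \<Longrightarrow> continuous_map Y euclidean (\<lambda>y. unsquash (y f))"
      and v\<Phi>: "\<And>f x. f \<in> F \<Longrightarrow> x \<in> topspace X \<Longrightarrow> unsquash (\<Phi> x f) = f x"
    using continuous_maps_factor_through_metrizable[OF \<open>countable F\<close> F_cont] by blast
  then have Y: "normal_space Y"
    by (simp add: metrizable_imp_normal_space)
  define G where "G = (\<lambda>y. INF n. unsquash (y (gs n)))"
  define H where "H = (\<lambda>y. SUP n. unsquash (y (hs n)))"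
  have G\<Phi>: "G (\<Phi> x) = g x" and H\<Phi>: "H (\<Phi> x) = h x" if "x \<in> topspace X" for x
    using envelopes v\<Phi> that by (auto simp: G_def H_def F_def)
  have "countable_hahn_pair Y G H"
    unfolding G_def H_def using envelopes
    by (intro countable_hahn_pair_pushforward[OF surj, where gs = gs and hs = hs])
      (auto simp: F_def v v\<Phi>)
  moreover have "first_stable_baire Y G"
    by (rule first_stable_baire_pushforward[OF \<open>stably_converges X p g\<close> surj,
          of "\<lambda>n y. unsquash (y (p n))"]) (auto simp: F_def v v\<Phi> G\<Phi>)
  moreover have "first_stable_baire Y H"
    by (rule first_stable_baire_pushforward[OF \<open>stably_converges X q h\<close> surj,
          of "\<lambda>n y. unsquash (y (q n))"]) (auto simp: F_def v v\<Phi> H\<Phi>)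
  ultimately have "stable_hahn_pair Y G H"
    by (intro stable_hahn_pair_if_sigma_continuous[OF Y] hahn_pair_if_countable_hahn_pair
        sigma_continuous_if_first_stable_baire)
  then show ?thesis
    by (rule stable_hahn_pair_pullback[OF _ \<Phi>]) (simp add: G\<Phi> H\<Phi>)
qed

theorem proposition2p4:
  fixes X :: "'a topology" and g h :: "'a \<Rightarrow> ereal"
  shows "(stable_hahn_pair X g h \<longleftrightarrow>
            countable_hahn_pair X g h \<and> first_stable_baire X g \<and> first_stable_baire X h)
       \<and> (normal_space X \<longrightarrow>
            (stable_hahn_pair X g h \<longleftrightarrow>
               hahn_pair X g h \<and> first_stable_baire X g \<and> first_stable_baire X h)
          \<and> (stable_hahn_pair X g h \<longleftrightarrow>
               hahn_pair X g h \<and> sigma_continuous X g \<and> sigma_continuous X h))"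
proof -
  have stable_imp: "hahn_pair X g h \<and> countable_hahn_pair X g h \<and>
      first_stable_baire X g \<and> first_stable_baire X h" if "stable_hahn_pair X g h"
    using that hahn_pair_if_stable_hahn_pair countable_hahn_pair_if_stable_hahn_pair
      first_stable_baire_if_stable_hahn_pair by blast
  show ?thesis
    using stable_imp stable_hahn_pair_if_countable_hahn_pair[of X g h]
      stable_hahn_pair_if_sigma_continuous[of X g h]
      sigma_continuous_if_first_stable_baire[of X g] sigma_continuous_if_first_stable_baire[of X h]
    by blast
qed

end
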